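(* The following hold: (1) $\mathsf{SLT}\subsetneq\mathsf{LLT}\subsetneq\mathsf{LLT}_\cup\subseteq\mathsf{LLT}_{\cup\cap}\subsetneq\mathsf{LTT}$ and $\mathsf{SLT}_\cup\subsetneq\mathsf{LLT}_\cup$. (2) $\mathsf{LLT}$ and $\mathsf{LT}$ are incomparable (neither contains the other), and $\mathsf{LLT}_\cup$ and $\mathsf{LT}$ are incomparable. (3) $\mathsf{LTT}$ equals the closure of $\mathsf{LLT}$ under union, intersection and complement.
   Context: Let $\Sigma$ be a finite alphabet. For a word $w$ and $\ell\in\mathbb N_0$, $p_\ell(w)$ (resp. $s_\ell(w)$) is the prefix (resp. suffix) of $w$ of length $\ell$ if $|w|\ge\ell$ and $w$ otherwise; $I_\ell(w)$ is the set of infixes of $w$ of length exactly $\ell$; $|w|_m$ is the number of occurrences of $m$ as an infix of $w$; $\Sigma^{\le\ell}$ is the set of words of length $\le\ell$. The empty word is disregarded in all language comparisons. $\mathsf{SLT}$: $L$ is strictly locally testable if there are $\ell\in\mathbb N_+$, $\pi,\sigma\subseteq\Sigma^{\le\ell}$, $\mu\subseteq\Sigma^\ell$ with $w\in L\iff p_{\ell-1}(w)\in\pi$, $I_\ell(w)\subseteq\mu$, $s_{\ell-1}(w)\in\sigma$. $\mathsf{LT}$: $L$ is locally testable if there is $\ell\in\mathbb N_+$ such that whenever $p_{\ell-1}(w_1)=p_{\ell-1}(w_2)$, $I_\ell(w_1)=I_\ell(w_2)$ and $s_{\ell-1}(w_1)=s_{\ell-1}(w_2)$, then $w_1\in L\iff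 w_2\in L$. $\mathsf{LTT}$: $L$ is locally threshold testable if there are $\theta,\ell\in\mathbb N_+$ such that for all $w_1,w_2$ with $p_{\ell-1}(w_1)=p_{\ell-1}(w_2)$, $s_{\ell-1}(w_1)=s_{\ell-1}(w_2)$, and for every $m\in\Sigma^\ell$ ($|w_i|_m<\theta$ for some $i\in\{1,2\}$ implies $|w_1|_m=|w_2|_m$), we have $w_1\in L\iff w_2\in L$. $\mathsf{LLT}$: for $\ell\in\mathbb N_0$, $\theta\in\mathbb R_{\ge0}$, $\pi,\sigma\subseteq\Sigma^{\le\ell-1}$, $\alpha\colon\Sigma^\ell\to\mathbb R_{\ge0}$, $\mathrm{LLin}_\ell(\pi,\sigma,\alpha,\theta)$ is the set of $w\in\Sigma^+$ with $p_{\ell-1}(w)\in\pi$, $s_{\ell-1}(w)\in\sigma$ and $\sum_{m\in\Sigma^\ell}\alpha(m)|w|_m\le\theta$; $\mathsf{LLT}$ is the class of all such languages (over all finite alphabets). $\mathsf{SLT}_\cup$, $\mathsf{LLT}_\cup$ denote closures under finite union; $\mathsf{LLT}_{\cup\cap}$ the closure of $\mathsf{LLT}$ under finite union and intersection. *)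

theory Defs
  imports Complex_Main
begin

text \<open>Letters are natural numbers; an alphabet is a finite set of letters.
  A language over an alphabet S is a set of nonempty words over S
  (the empty word is disregarded).\<close>

type_synonym word = "nat list"
type_synonym lang = "word set"
type_synonym lclass = "nat set \<Rightarrow> lang \<Rightarrow> bool"

definition nonempty_words :: "nat set \<Rightarrow> lang" where
  "nonempty_words S = {w \<in> lists S. w \<noteq> []}"

definition words_len :: "nat set \<Rightarrow> nat \<Rightarrow> lang" where
  "words_len S l = {w \<in> lists S. length w = l}"

text \<open>Words of length at most k; k is an integer so that negative bounds give the empty set.\<close>
definition words_upto :: "nat set \<Rightarrow> int \<Rightarrow> lang" where
  "words_upto S k = {w \<in> lists S. int (length w) \<le> k}"

definition pref :: "nat \<Rightarrow> word \<Rightarrow> word" where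
  "pref l w = take l w"

definition suf :: "nat \<Rightarrow> word \<Rightarrow> word" where
  "suf l w = drop (length w - l) w"

definition infixes :: "nat \<Rightarrow> word \<Rightarrow> lang" where
  "infixes l w = {take l (drop i w) | i. i + l \<le> length w}"

definition occ :: "word \<Rightarrow> word \<Rightarrow> nat" where
  "occ m w = card {i. i + length m \<le> length w \<and> take (length m) (drop i w) = m}"

definition SLT :: lclass where
  "SLT S L \<longleftrightarrow> L \<subseteq> nonempty_words S \<and>
    (\<exists>l \<ge> 1. \<exists>\<pi> \<sigma> \<mu>. \<pi> \<subseteq> words_upto S (int l) \<and> \<sigma> \<subseteq> words_upto S (int l) \<and>
       \<mu> \<subseteq> words_len S l \<and>
       (\<forall>w \<in> nonempty_words S. w \<in> L \<longleftrightarrow>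
          pref (l - 1) w \<in> \<pi> \<and> infixes l w \<subseteq> \<mu> \<and> suf (l - 1) w \<in> \<sigma>))"

definition LT :: lclass where
  "LT S L \<longleftrightarrow> L \<subseteq> nonempty_words S \<and>
    (\<exists>l \<ge> 1. \<forall>w1 \<in> nonempty_words S. \<forall>w2 \<in> nonempty_words S.
       pref (l - 1) w1 = pref (l - 1) w2 \<and> infixes l w1 = infixes l w2 \<and>
       suf (l - 1) w1 = suf (l - 1) w2 \<longrightarrow> (w1 \<in> L \<longleftrightarrow> w2 \<in> L))"

definition LTT :: lclass where
  "LTT S L \<longleftrightarrow> L \<subseteq> nonempty_words S \<and>
    (\<exists>\<theta> \<ge> 1. \<exists>l \<ge> 1. \<forall>w1 \<in> nonempty_words S. \<forall>w2 \<in> nonempty_words S.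
       pref (l - 1) w1 = pref (l - 1) w2 \<and> suf (l - 1) w1 = suf (l - 1) w2 \<and>
       (\<forall>m \<in> words_len S l. (occ m w1 < \<theta> \<or> occ m w2 < \<theta>) \<longrightarrow> occ m w1 = occ m w2)
       \<longrightarrow> (w1 \<in> L \<longleftrightarrow> w2 \<in> L))"

definition LLin :: "nat set \<Rightarrow> nat \<Rightarrow> lang \<Rightarrow> lang \<Rightarrow> (word \<Rightarrow> real) \<Rightarrow> real \<Rightarrow> lang" where
  "LLin S l \<pi> \<sigma> \<alpha> \<theta> = {w \<in> nonempty_words S. pref (l - 1) w \<in> \<pi> \<and> suf (l - 1) w \<in> \<sigma> \<and>
      (\<Sum>m \<in> words_len S l. \<alpha> m * real (occ m w)) \<le> \<theta>}"

definition LLT :: lclass where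
  "LLT S L \<longleftrightarrow> (\<exists>l \<pi> \<sigma> \<alpha> \<theta>. \<pi> \<subseteq> words_upto S (int l - 1) \<and> \<sigma> \<subseteq> words_upto S (int l - 1) \<and>
      (\<forall>m \<in> words_len S l. \<alpha> m \<ge> 0) \<and> \<theta> \<ge> 0 \<and> L = LLin S l \<pi> \<sigma> \<alpha> \<theta>)"

inductive union_cl :: "lclass \<Rightarrow> lclass" for C :: lclass and S :: "nat set" where
  base: "C S L \<Longrightarrow> union_cl C S L"
| un: "union_cl C S L1 \<Longrightarrow> union_cl C S L2 \<Longrightarrow> union_cl C S (L1 \<union> L2)"

inductive union_inter_cl :: "lclass \<Rightarrow> lclass" for C :: lclass and S :: "nat set" where
  base: "C S L \<Longrightarrow> union_inter_cl C S L"
| un: "union_inter_cl C S L1 \<Longrightarrow> union_inter_cl C S L2 \<Longrightarrow> union_inter_cl C S (L1 \<union> L2)"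
| inter: "union_inter_cl C S L1 \<Longrightarrow> union_inter_cl C S L2 \<Longrightarrow> union_inter_cl C S (L1 \<inter> L2)"

inductive bool_cl :: "lclass \<Rightarrow> lclass" for C :: lclass and S :: "nat set" where
  base: "C S L \<Longrightarrow> bool_cl C S L"
| un: "bool_cl C S L1 \<Longrightarrow> bool_cl C S L2 \<Longrightarrow> bool_cl C S (L1 \<union> L2)"
| inter: "bool_cl C S L1 \<Longrightarrow> bool_cl C S L2 \<Longrightarrow> bool_cl C S (L1 \<inter> L2)"
| compl: "bool_cl C S L \<Longrightarrow> bool_cl C S (nonempty_words S - L)"

definition class_subset :: "lclass \<Rightarrow> lclass \<Rightarrow> bool" where
  "class_subset C D \<longleftrightarrow> (\<forall>S L. finite S \<longrightarrow> C S L \<longrightarrow> D S L)"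

definition strict_subclass :: "lclass \<Rightarrow> lclass \<Rightarrow> bool" where
  "strict_subclass C D \<longleftrightarrow> class_subset C D \<and> \<not> class_subset D C"

definition incomparable :: "lclass \<Rightarrow> lclass \<Rightarrow> bool" where
  "incomparable C D \<longleftrightarrow> \<not> class_subset C D \<and> \<not> class_subset D C"

end

theory Submission
  imports Defs
begin

text \<open>
  A language \<open>LLin S l \<pi> \<sigma> \<alpha> \<theta>\<close> is locally threshold testable: once a factor of positive
  weight \<open>\<alpha> m\<close> occurs more than \<open>\<theta> / \<alpha> m\<close> times the weighted sum exceeds \<open>\<theta>\<close>, so
  only counts up to a threshold matter. LTT is closed under the boolean operations, and conversely
  an LTT language is a finite union of classes fixed by a prefix, a suffix and factor counts capped at
  the threshold; each class is an intersection of LLT languages and complements of LLT languages.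

  The words \<open>1\<^sup>N 0 1\<^sup>N\<close> and \<open>1\<^sup>N 0 1\<^sup>N 0 1\<^sup>N\<close> have the
  same prefixes, suffixes and sets of factors for large \<open>N\<close>, so SLT, unions of SLT and LT languages
  cannot separate them, whereas "at most one 0" is LLT. Deleting the \<open>0\<close> from \<open>1\<^sup>N 0 1\<^sup>N\<close> keeps
  prefix and suffix and lowers every weighted sum, so unions and intersections of LLT languages that
  contain the first word contain \<open>1\<^sup>N\<close>; hence "contains 0", which is LT and LTT, is not among them.
  Finally, on \<open>2\<^sup>l x 2\<^sup>l y 2\<^sup>l\<close> a weighted sum is additive in \<open>x\<close> and \<open>y\<close>, so the union of
  "no 0" and "no 1" over \<open>{0, 1, 2}\<close> is not LLT.
\<close>

section \<open>Counting occurrences of factors\<close>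

lemma finite_bounded_positions: "finite {i::nat. i + k \<le> n \<and> P i}"
  by (rule finite_subset[of _ "{..n}"]) auto

lemma occ_split_at:
  assumes "d \<le> length w"
  shows "occ m w = card {i. i < d \<and> i + length m \<le> length w \<and> take (length m) (drop i w) = m}
                   + occ m (drop d w)"
proof -
  let ?l = "length m"
  let ?A = "{i. i < d \<and> i + ?l \<le> length w \<and> take ?l (drop i w) = m}"
  let ?J = "{j. j + ?l \<le> length (drop d w) \<and> take ?l (drop j (drop d w)) = m}"
  have split: "{i. i + ?l \<le> length w \<and> take ?l (drop i w) = m} = ?A \<union> (\<lambda>j. j + d) ` ?J"
  proof (rule set_eqI, rule iffI)
    fix i assume i: "i \<in> {i. i + ?l \<le> length w \<and> take ?l (drop i w) = m}"
    show "i \<in> ?A \<union> (\<lambda>j. j + d) ` ?J"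
    proof (cases "i < d")
      case True then show ?thesis using i by auto
    next
      case False
      then have "i = (i - d) + d" by simp
      moreover have "i - d \<in> ?J" using i False assms by (auto simp: add.commute)
      ultimately show ?thesis by blast
    qed
  next
    fix i assume "i \<in> ?A \<union> (\<lambda>j. j + d) ` ?J"
    then show "i \<in> {i. i + ?l \<le> length w \<and> take ?l (drop i w) = m}"
      using assms by (auto simp: add.commute)
  qed
  have "finite ?A" "finite ?J" by (rule finite_subset[of _ "{..length w}"]; auto) (rule finite_bounded_positions)
  then have "card (?A \<union> (\<lambda>j. j + d) ` ?J) = card ?A + card ?J"
    by (subst card_Un_disjoint) (auto simp: card_image inj_on_def)
  then show ?thesis unfolding occ_def split by simp
qed

text \<open>Occurrences in \<open>x @ y\<close> are those inside \<open>x\<close> plus those starting in the last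
  \<open>|m| - 1\<close> letters of \<open>x\<close> or later.\<close>
lemma occ_append:
  assumes "1 \<le> length m"
  shows "occ m (x @ y) = occ m x + occ m (suf (length m - 1) x @ y)"
proof -
  let ?l = "length m"
  define d where "d = length x - (?l - 1)"
  have "drop d (x @ y) = suf (?l - 1) x @ y" by (simp add: d_def suf_def)
  moreover have "{i. i < d \<and> i + ?l \<le> length (x @ y) \<and> take ?l (drop i (x @ y)) = m}
        = {i. i + ?l \<le> length x \<and> take ?l (drop i x) = m}"
    using assms by (auto simp: d_def)
  ultimately show ?thesis using occ_split_at[of d "x @ y" m] unfolding occ_def by (simp add: d_def)
qed

lemma occ_le_occ_append: "1 \<le> length m \<Longrightarrow> occ m x \<le> occ m (x @ y)"
  using occ_append[of m x y] by linarith

lemma occ_singleton: "occ [a] w = count_list w a"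
proof (induction w)
  case Nil then show ?case by (simp add: occ_def)
next
  case (Cons b w)
  have "{i. i + 1 \<le> 1 \<and> take 1 (drop i [b]) = [a]} = (if b = a then {0} else {})"
    by auto
  then have "occ [a] [b] = (if b = a then 1 else 0)" by (simp add: occ_def)
  then show ?case using occ_append[of "[a]" "[b]" w] Cons by (simp add: suf_def)
qed

lemma occ_eq_0_iff: "length m = l \<Longrightarrow> occ m w = 0 \<longleftrightarrow> m \<notin> infixes l w"
  unfolding occ_def infixes_def using finite_bounded_positions by (subst card_0_eq) auto

lemma finite_words_len: "finite S \<Longrightarrow> finite (words_len S l)"
  using finite_lists_length_eq[of S l] by (simp add: words_len_def lists_eq_set)

lemma finite_words_upto: "finite S \<Longrightarrow> finite (words_upto S k)"
  by (rule finite_subset[OF _ finite_lists_length_le[of S "nat k"]]) (auto simp: words_upto_def)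

lemma words_upto_negative: "k < 0 \<Longrightarrow> words_upto S k = {}"
  by (auto simp: words_upto_def)

lemma infixes_subset_words_len: "w \<in> lists S \<Longrightarrow> infixes l w \<subseteq> words_len S l"
  by (auto simp: infixes_def words_len_def dest: in_set_dropD in_set_takeD)

lemma pref_in_words_upto: "w \<in> lists S \<Longrightarrow> 1 \<le> l \<Longrightarrow> pref (l - 1) w \<in> words_upto S (int l - 1)"
  by (auto simp: pref_def words_upto_def dest: in_set_takeD)

lemma suf_in_words_upto: "w \<in> lists S \<Longrightarrow> 1 \<le> l \<Longrightarrow> suf (l - 1) w \<in> words_upto S (int l - 1)"
  by (auto simp: suf_def words_upto_def dest: in_set_dropD)

lemma pref_pref: "k \<le> k' \<Longrightarrow> pref k (pref k' w) = pref k w"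
  by (simp add: pref_def min_def)

lemma suf_suf:
  assumes "k \<le> k'"
  shows "suf k (suf k' w) = suf k w"
proof -
  have "length w - (length w - k' + k) + (length w - k') = length w - k" using assms by arith
  then show ?thesis by (simp add: suf_def)
qed

lemma pref_replicate_append: "k \<le> N \<Longrightarrow> pref k (replicate N c @ r) = replicate k c"
  by (simp add: pref_def)

lemma suf_append_replicate: "k \<le> N \<Longrightarrow> suf k (r @ replicate N c) = replicate k c"
  by (simp add: suf_def)

text \<open>An occurrence of \<open>m\<close> that does not start in the last \<open>l' - 1\<close> letters extends uniquely to
  an occurrence of a factor of length \<open>l' \<ge> |m|\<close>.\<close>
lemma occ_eq_sum_extensions:
  assumes S: "finite S" and w: "w \<in> lists S" and m: "length m = l" and "l \<le> l'" "1 \<le> l'"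
  shows "occ m w = (\<Sum>m'\<in>{m'\<in>words_len S l'. take l m' = m}. occ m' w) + occ m (suf (l' - 1) w)"
proof -
  define d where "d = length w - (l' - 1)"
  let ?M = "{m'\<in>words_len S l'. take l m' = m}"
  let ?B = "\<lambda>m'. {i. i + l' \<le> length w \<and> take l' (drop i w) = m'}"
  let ?A = "{i. i < d \<and> i + length m \<le> length w \<and> take (length m) (drop i w) = m}"
  have AB: "?A = (\<Union>m'\<in>?M. ?B m')"
  proof (rule set_eqI, rule iffI)
    fix i assume i: "i \<in> ?A"
    then have i': "i + l' \<le> length w" using assms by (auto simp: d_def)
    have "take l' (drop i w) \<in> ?M"
      using i i' assms by (auto simp: words_len_def min_def dest: in_set_dropD in_set_takeD)
    then show "i \<in> (\<Union>m'\<in>?M. ?B m')" using i' by blast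
  next
    fix i assume "i \<in> (\<Union>m'\<in>?M. ?B m')"
    then obtain m' where m': "m' \<in> ?M" "i + l' \<le> length w" "take l' (drop i w) = m'" by blast
    then have "take l (drop i w) = m" using \<open>l \<le> l'\<close> by (metis (mono_tags) mem_Collect_eq min.absorb1 take_take)
    then show "i \<in> ?A" using m' assms by (auto simp: d_def)
  qed
  have "card ?A = (\<Sum>m'\<in>?M. card (?B m'))"
    unfolding AB by (rule card_UN_disjoint) (use finite_words_len[OF S] finite_bounded_positions in auto)
  also have "\<dots> = (\<Sum>m'\<in>?M. occ m' w)"
    by (rule sum.cong) (auto simp: occ_def words_len_def)
  finally show ?thesis using occ_split_at[of d w m] by (simp add: d_def suf_def)
qed

section \<open>Local threshold testability and its boolean closure\<close>

definition ltt_params :: "nat set \<Rightarrow> lang \<Rightarrow> nat \<Rightarrow> nat \<Rightarrow> bool" where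
  "ltt_params S L \<theta> l \<longleftrightarrow> (\<forall>w1 \<in> nonempty_words S. \<forall>w2 \<in> nonempty_words S.
       pref (l - 1) w1 = pref (l - 1) w2 \<and> suf (l - 1) w1 = suf (l - 1) w2 \<and>
       (\<forall>m \<in> words_len S l. (occ m w1 < \<theta> \<or> occ m w2 < \<theta>) \<longrightarrow> occ m w1 = occ m w2)
       \<longrightarrow> (w1 \<in> L \<longleftrightarrow> w2 \<in> L))"

lemma LTT_iff_ltt_params: "LTT S L \<longleftrightarrow> L \<subseteq> nonempty_words S \<and> (\<exists>\<theta>\<ge>1. \<exists>l\<ge>1. ltt_params S L \<theta> l)"
  unfolding LTT_def ltt_params_def by blast

lemma ltt_paramsD:
  assumes "ltt_params S L \<theta> l" "w1 \<in> nonempty_words S" "w2 \<in> nonempty_words S"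
    "pref (l - 1) w1 = pref (l - 1) w2" "suf (l - 1) w1 = suf (l - 1) w2"
    "\<And>m. m \<in> words_len S l \<Longrightarrow> occ m w1 < \<theta> \<or> occ m w2 < \<theta> \<Longrightarrow> occ m w1 = occ m w2"
  shows "w1 \<in> L \<longleftrightarrow> w2 \<in> L"
  using assms unfolding ltt_params_def by blast

lemma ltt_paramsI:
  assumes "\<And>w1 w2. w1 \<in> nonempty_words S \<Longrightarrow> w2 \<in> nonempty_words S \<Longrightarrow>
    pref (l - 1) w1 = pref (l - 1) w2 \<Longrightarrow> suf (l - 1) w1 = suf (l - 1) w2 \<Longrightarrow>
    (\<And>m. m \<in> words_len S l \<Longrightarrow> occ m w1 < \<theta> \<or> occ m w2 < \<theta> \<Longrightarrow> occ m w1 = occ m w2)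
    \<Longrightarrow> w1 \<in> L \<longleftrightarrow> w2 \<in> L"
  shows "ltt_params S L \<theta> l"
  unfolding ltt_params_def using assms by blast

lemma ltt_params_mono_threshold:
  assumes "\<theta> \<le> \<theta>'" "ltt_params S L \<theta> l"
  shows "ltt_params S L \<theta>' l"
  using assms unfolding ltt_params_def by (meson order_less_le_trans)

text \<open>Counts of the shorter factors are recovered from the longer ones and the suffix, so
  agreement below the threshold is inherited.\<close>
lemma occ_agree_on_shorter_factors:
  assumes S: "finite S" and w: "w1 \<in> lists S" "w2 \<in> lists S" and l: "1 \<le> l" "l \<le> l'"
    and suf_eq: "suf (l' - 1) w1 = suf (l' - 1) w2"
    and agree: "\<And>m'. m' \<in> words_len S l' \<Longrightarrow> occ m' w1 < \<theta> \<or> occ m' w2 < \<theta> \<Longrightarrow> occ m' w1 = occ m' w2"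
    and m: "m \<in> words_len S l" and below: "occ m w1 < \<theta> \<or> occ m w2 < \<theta>"
  shows "occ m w1 = occ m w2"
proof -
  let ?M = "{m'\<in>words_len S l'. take l m' = m}"
  have ml: "length m = l" using m by (simp add: words_len_def)
  have sum1: "occ m w1 = (\<Sum>m'\<in>?M. occ m' w1) + occ m (suf (l' - 1) w1)"
    and sum2: "occ m w2 = (\<Sum>m'\<in>?M. occ m' w2) + occ m (suf (l' - 1) w2)"
    using occ_eq_sum_extensions[OF S _ ml l(2)] w l by auto
  have fM: "finite ?M" using finite_words_len[OF S] by simp
  have "(\<Sum>m'\<in>?M. occ m' w1) = (\<Sum>m'\<in>?M. occ m' w2)"
  proof (rule sum.cong)
    fix m' assume m': "m' \<in> ?M"
    have "occ m' w1 \<le> occ m w1" "occ m' w2 \<le> occ m w2"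
      using member_le_sum[OF m', of "\<lambda>m'. occ m' w1", OF _ fM]
        member_le_sum[OF m', of "\<lambda>m'. occ m' w2", OF _ fM] sum1 sum2 by simp_all
    then show "occ m' w1 = occ m' w2" using agree m' below by auto
  qed simp
  then show ?thesis using sum1 sum2 suf_eq by simp
qed

lemma ltt_params_mono_window:
  assumes S: "finite S" and l: "1 \<le> l" "l \<le> l'" and L: "ltt_params S L \<theta> l"
  shows "ltt_params S L \<theta> l'"
proof (rule ltt_paramsI)
  fix w1 w2 assume w: "w1 \<in> nonempty_words S" "w2 \<in> nonempty_words S"
    and pref_eq: "pref (l' - 1) w1 = pref (l' - 1) w2" and suf_eq: "suf (l' - 1) w1 = suf (l' - 1) w2"
    and agree: "\<And>m. m \<in> words_len S l' \<Longrightarrow> occ m w1 < \<theta> \<or> occ m w2 < \<theta> \<Longrightarrow> occ m w1 = occ m w2"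
  have "l - 1 \<le> l' - 1" using l by simp
  then have "pref (l - 1) w1 = pref (l - 1) w2" "suf (l - 1) w1 = suf (l - 1) w2"
    by (metis pref_eq pref_pref, metis suf_eq suf_suf)
  moreover have "w1 \<in> lists S" "w2 \<in> lists S" using w by (auto simp: nonempty_words_def)
  ultimately show "w1 \<in> L \<longleftrightarrow> w2 \<in> L"
    using ltt_paramsD[OF L w] occ_agree_on_shorter_factors[OF S _ _ l suf_eq agree] by blast
qed

lemma ltt_params_common:
  assumes "finite S" "LTT S L1" "LTT S L2"
  obtains \<theta> l where "1 \<le> \<theta>" "1 \<le> l" "ltt_params S L1 \<theta> l" "ltt_params S L2 \<theta> l"
proof -
  obtain \<theta>1 l1 where 1: "1 \<le> \<theta>1" "1 \<le> l1" "ltt_params S L1 \<theta>1 l1"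
    using assms(2) unfolding LTT_iff_ltt_params by blast
  obtain \<theta>2 l2 where 2: "1 \<le> \<theta>2" "1 \<le> l2" "ltt_params S L2 \<theta>2 l2"
    using assms(3) unfolding LTT_iff_ltt_params by blast
  have "ltt_params S L1 (max \<theta>1 \<theta>2) (max l1 l2)" "ltt_params S L2 (max \<theta>1 \<theta>2) (max l1 l2)"
    by (rule ltt_params_mono_window[OF assms(1) _ _ ltt_params_mono_threshold]; use 1 2 in simp)+
  with 1 2 show ?thesis by (intro that[of "max \<theta>1 \<theta>2" "max l1 l2"]) auto
qed

lemma LTT_combine:
  assumes S: "finite S" and "LTT S L1" "LTT S L2" and L: "L \<subseteq> nonempty_words S"
    and comb: "\<And>w. w \<in> nonempty_words S \<Longrightarrow> w \<in> L \<longleftrightarrow> f (w \<in> L1) (w \<in> L2)"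
  shows "LTT S L"
proof -
  obtain \<theta> l where "1 \<le> \<theta>" "1 \<le> l" and L1: "ltt_params S L1 \<theta> l" and L2: "ltt_params S L2 \<theta> l"
    using ltt_params_common[OF assms(1-3)] by blast
  have "ltt_params S L \<theta> l"
  proof (rule ltt_paramsI)
    fix w1 w2 assume w: "w1 \<in> nonempty_words S" "w2 \<in> nonempty_words S"
      and "pref (l - 1) w1 = pref (l - 1) w2" "suf (l - 1) w1 = suf (l - 1) w2"
      and "\<And>m. m \<in> words_len S l \<Longrightarrow> occ m w1 < \<theta> \<or> occ m w2 < \<theta> \<Longrightarrow> occ m w1 = occ m w2"
    then have "w1 \<in> L1 \<longleftrightarrow> w2 \<in> L1" "w1 \<in> L2 \<longleftrightarrow> w2 \<in> L2"
      using ltt_paramsD[OF L1] ltt_paramsD[OF L2] by blast+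
    then show "w1 \<in> L \<longleftrightarrow> w2 \<in> L" using comb[OF w(1)] comb[OF w(2)] by simp
  qed
  with \<open>1 \<le> \<theta>\<close> \<open>1 \<le> l\<close> L show ?thesis unfolding LTT_iff_ltt_params by blast
qed

lemma LTT_Un: "finite S \<Longrightarrow> LTT S L1 \<Longrightarrow> LTT S L2 \<Longrightarrow> LTT S (L1 \<union> L2)"
  by (rule LTT_combine[where f = "(\<or>)"]) (auto simp: LTT_def)

lemma LTT_Int: "finite S \<Longrightarrow> LTT S L1 \<Longrightarrow> LTT S L2 \<Longrightarrow> LTT S (L1 \<inter> L2)"
  by (rule LTT_combine[where f = "(\<and>)"]) (auto simp: LTT_def)

lemma LTT_complement: "finite S \<Longrightarrow> LTT S L \<Longrightarrow> LTT S (nonempty_words S - L)"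
  by (rule LTT_combine[where f = "\<lambda>a _. \<not> a"]) auto

lemma LTT_empty: "LTT S {}"
proof -
  have "ltt_params S {} 1 1" by (rule ltt_paramsI) simp
  then show ?thesis unfolding LTT_iff_ltt_params by auto
qed

section \<open>Locally linear languages\<close>

text \<open>A window of length 0 forces an empty prefix set, since \<open>words_upto S (-1) = {}\<close>.\<close>
lemma LLT_E:
  assumes "LLT S L"
  obtains "L = {}"
    | l \<pi> \<sigma> \<alpha> \<theta> where "1 \<le> l" "\<forall>m \<in> words_len S l. 0 \<le> \<alpha> m" "0 \<le> \<theta>" "L = LLin S l \<pi> \<sigma> \<alpha> \<theta>"
proof -
  obtain l \<pi> \<sigma> \<alpha> \<theta> where \<pi>: "\<pi> \<subseteq> words_upto S (int l - 1)"
    and "\<forall>m \<in> words_len S l. 0 \<le> \<alpha> m" "0 \<le> \<theta>" and L: "L = LLin S l \<pi> \<sigma> \<alpha> \<theta>"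
    using assms unfolding LLT_def by blast
  show thesis
  proof (cases "l = 0")
    case True
    then have "\<pi> = {}" using \<pi> words_upto_negative[of "int l - 1" S] by simp
    then show thesis using L that(1) by (simp add: LLin_def)
  next
    case False
    then show thesis using that(2)[of l \<alpha> \<theta>] \<open>\<forall>m \<in> words_len S l. 0 \<le> \<alpha> m\<close> \<open>0 \<le> \<theta>\<close> L by simp
  qed
qed

lemma LLT_empty: "LLT S {}"
  unfolding LLT_def
  by (intro exI[of _ 0] exI[of _ "{}"] exI[of _ "\<lambda>_. 0"] exI[of _ 0]) (auto simp: LLin_def)

lemma LLT_occ_le:
  assumes S: "finite S" and l: "1 \<le> l" and m: "m \<in> words_len S l" and t: "0 \<le> t"
  shows "LLT S {w \<in> nonempty_words S. real (occ m w) \<le> t}"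
proof -
  define \<alpha> where "\<alpha> = (\<lambda>x. if x = m then 1 else (0::real))"
  have weighted_sum: "(\<Sum>x\<in>words_len S l. \<alpha> x * real (occ x w)) = real (occ m w)" for w
  proof -
    have "(\<Sum>x\<in>words_len S l. \<alpha> x * real (occ x w))
        = (\<Sum>x\<in>words_len S l. if x = m then real (occ x w) else 0)"
      by (rule sum.cong) (auto simp: \<alpha>_def)
    then show ?thesis using finite_words_len[OF S] m by simp
  qed
  have "{w \<in> nonempty_words S. real (occ m w) \<le> t} =
        LLin S l (words_upto S (int l - 1)) (words_upto S (int l - 1)) \<alpha> t"
    unfolding LLin_def weighted_sum using pref_in_words_upto[OF _ l] suf_in_words_upto[OF _ l]
    by (auto simp: nonempty_words_def)
  then show ?thesis unfolding LLT_def using t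
    by (intro exI[of _ l] exI[of _ "words_upto S (int l - 1)"] exI[of _ "words_upto S (int l - 1)"]
        exI[of _ \<alpha>] exI[of _ t]) (auto simp: \<alpha>_def)
qed

lemma LLT_count_list_le:
  assumes "finite S" "a \<in> S" "0 \<le> t"
  shows "LLT S {w \<in> nonempty_words S. real (count_list w a) \<le> t}"
  using LLT_occ_le[OF assms(1) _ _ assms(3), of 1 "[a]"] assms(2)
  by (simp add: occ_singleton words_len_def)

lemma forbidden_factor_sum_le_0_iff:
  assumes S: "finite S" and w: "w \<in> lists S"
  shows "(\<Sum>m\<in>words_len S l. (if m \<in> \<mu> then 0 else 1) * real (occ m w)) \<le> 0 \<longleftrightarrow> infixes l w \<subseteq> \<mu>"
proof -
  let ?f = "\<lambda>m. (if m \<in> \<mu> then 0 else 1) * real (occ m w)"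
  have "0 \<le> (\<Sum>m\<in>words_len S l. ?f m)" by (rule sum_nonneg) simp
  then have "(\<Sum>m\<in>words_len S l. ?f m) \<le> 0 \<longleftrightarrow> (\<Sum>m\<in>words_len S l. ?f m) = 0" by linarith
  also have "\<dots> \<longleftrightarrow> (\<forall>m\<in>words_len S l. ?f m = 0)"
    by (rule sum_nonneg_eq_0_iff[OF finite_words_len[OF S]]) simp
  also have "\<dots> \<longleftrightarrow> (\<forall>m\<in>words_len S l. m \<notin> \<mu> \<longrightarrow> m \<notin> infixes l w)"
    by (intro ball_cong refl) (simp add: occ_eq_0_iff words_len_def)
  also have "\<dots> \<longleftrightarrow> infixes l w \<subseteq> \<mu>" using infixes_subset_words_len[OF w, of l] by auto
  finally show ?thesis .
qed

lemma SLT_imp_LLT: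
  assumes S: "finite S" and "SLT S L"
  shows "LLT S L"
proof -
  obtain l \<pi> \<sigma> \<mu> where L: "L \<subseteq> nonempty_words S" and l: "1 \<le> l"
    and mem: "\<forall>w \<in> nonempty_words S. w \<in> L \<longleftrightarrow>
          pref (l - 1) w \<in> \<pi> \<and> infixes l w \<subseteq> \<mu> \<and> suf (l - 1) w \<in> \<sigma>"
    using assms unfolding SLT_def by blast
  define \<alpha> where "\<alpha> = (\<lambda>m. if m \<in> \<mu> then 0 else (1::real))"
  define U where "U = words_upto S (int l - 1)"
  have "L = LLin S l (\<pi> \<inter> U) (\<sigma> \<inter> U) \<alpha> 0"
  proof (rule set_eqI)
    fix w
    show "w \<in> L \<longleftrightarrow> w \<in> LLin S l (\<pi> \<inter> U) (\<sigma> \<inter> U) \<alpha> 0"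
    proof (cases "w \<in> nonempty_words S")
      case True
      then have w: "w \<in> lists S" by (simp add: nonempty_words_def)
      show ?thesis
        using mem True forbidden_factor_sum_le_0_iff[OF S w] pref_in_words_upto[OF w l]
          suf_in_words_upto[OF w l]
        unfolding LLin_def U_def \<alpha>_def by auto
    next
      case False then show ?thesis using L by (auto simp: LLin_def)
    qed
  qed
  then show ?thesis unfolding LLT_def
    by (intro exI[of _ l] exI[of _ "\<pi> \<inter> U"] exI[of _ "\<sigma> \<inter> U"] exI[of _ \<alpha>] exI[of _ 0])
      (auto simp: \<alpha>_def U_def)
qed

lemma ex_threshold_above:
  assumes "finite W"
  obtains N :: nat where "1 \<le> N" "\<And>m. m \<in> W \<Longrightarrow> 0 < \<alpha> m \<Longrightarrow> \<theta> < real N * \<alpha> m"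
proof -
  have each: "\<forall>\<^sub>F N in sequentially. 0 < \<alpha> m \<longrightarrow> \<theta> < real N * \<alpha> m" for m
  proof -
    obtain n where n: "\<theta> / \<alpha> m < real n" using reals_Archimedean2 by blast
    have "0 < \<alpha> m \<longrightarrow> \<theta> < real N * \<alpha> m" if "n \<le> N" for N
    proof
      assume pos: "0 < \<alpha> m"
      have "\<theta> < real n * \<alpha> m" using n pos by (simp add: pos_divide_less_eq)
      also have "\<dots> \<le> real N * \<alpha> m" using that pos by (intro mult_right_mono) simp_all
      finally show "\<theta> < real N * \<alpha> m" .
    qed
    then show ?thesis unfolding eventually_sequentially by blast
  qed
  have "\<forall>\<^sub>F N in sequentially. 1 \<le> N \<and> (\<forall>m\<in>W. 0 < \<alpha> m \<longrightarrow> \<theta> < real N * \<alpha> m)"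
    by (intro eventually_conj eventually_ge_at_top eventually_ball_finite assms ballI each)
  then obtain N where "1 \<le> N" "\<forall>m\<in>W. 0 < \<alpha> m \<longrightarrow> \<theta> < real N * \<alpha> m"
    unfolding eventually_sequentially by auto
  then show ?thesis using that by blast
qed

lemma LLin_ltt_params:
  assumes S: "finite S" and \<alpha>: "\<forall>m \<in> words_len S l. 0 \<le> \<alpha> m"
    and N: "\<And>m. m \<in> words_len S l \<Longrightarrow> 0 < \<alpha> m \<Longrightarrow> \<theta> < real N * \<alpha> m"
  shows "ltt_params S (LLin S l \<pi> \<sigma> \<alpha> \<theta>) N l"
proof (rule ltt_paramsI)
  let ?W = "words_len S l"
  let ?sum = "\<lambda>w. \<Sum>m\<in>?W. \<alpha> m * real (occ m w)"
  fix w1 w2 assume w: "w1 \<in> nonempty_words S" "w2 \<in> nonempty_words S"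
    and ps: "pref (l - 1) w1 = pref (l - 1) w2" "suf (l - 1) w1 = suf (l - 1) w2"
    and agree: "\<And>m. m \<in> ?W \<Longrightarrow> occ m w1 < N \<or> occ m w2 < N \<Longrightarrow> occ m w1 = occ m w2"
  show "w1 \<in> LLin S l \<pi> \<sigma> \<alpha> \<theta> \<longleftrightarrow> w2 \<in> LLin S l \<pi> \<sigma> \<alpha> \<theta>"
  proof (cases "\<exists>m\<in>?W. 0 < \<alpha> m \<and> N \<le> occ m w1 \<and> N \<le> occ m w2")
    case True
    then obtain m where m: "m \<in> ?W" "0 < \<alpha> m" "N \<le> occ m w1" "N \<le> occ m w2" by blast
    have exceeds: "\<theta> < ?sum w" if "N \<le> occ m w" for w
    proof -
      have "\<theta> < real N * \<alpha> m" by (rule N[OF m(1,2)])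
      also have "\<dots> \<le> \<alpha> m * real (occ m w)" using that m(2) by (simp add: mult.commute)
      also have "\<dots> \<le> ?sum w" by (rule member_le_sum[OF m(1) _ finite_words_len[OF S]]) (use \<alpha> in simp)
      finally show ?thesis .
    qed
    from exceeds[OF m(3)] exceeds[OF m(4)] show ?thesis unfolding LLin_def by auto
  next
    case False
    have "?sum w1 = ?sum w2"
    proof (rule sum.cong)
      fix m assume m: "m \<in> ?W"
      show "\<alpha> m * real (occ m w1) = \<alpha> m * real (occ m w2)"
      proof (cases "0 < \<alpha> m")
        case True
        then have "occ m w1 < N \<or> occ m w2 < N" using False m by auto
        then show ?thesis using agree[OF m] by simp
      next
        case False
        then show ?thesis using \<alpha> m by (simp add: order.antisym)
      qed
    qed simp
    then show ?thesis unfolding LLin_def using w ps by auto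
  qed
qed

lemma LLT_imp_LTT:
  assumes S: "finite S" and "LLT S L"
  shows "LTT S L"
  using assms(2)
proof (cases rule: LLT_E)
  case 1
  then show ?thesis by (simp add: LTT_empty)
next
  case (2 l \<pi> \<sigma> \<alpha> \<theta>)
  obtain N where "1 \<le> N" "\<And>m. m \<in> words_len S l \<Longrightarrow> 0 < \<alpha> m \<Longrightarrow> \<theta> < real N * \<alpha> m"
    using ex_threshold_above[OF finite_words_len[OF S]] by metis
  then have "ltt_params S L N l" using LLin_ltt_params[OF S] 2 by simp
  with \<open>1 \<le> N\<close> 2 show ?thesis unfolding LTT_iff_ltt_params by (auto simp: LLin_def)
qed

lemma union_cl_imp_union_inter_cl: "union_cl C S L \<Longrightarrow> union_inter_cl C S L"
  by (induction rule: union_cl.induct) (auto intro: union_inter_cl.intros)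

lemma union_inter_cl_imp_bool_cl: "union_inter_cl C S L \<Longrightarrow> bool_cl C S L"
  by (induction rule: union_inter_cl.induct) (auto intro: bool_cl.intros)

lemma union_cl_mono:
  assumes "\<And>L. C S L \<Longrightarrow> D S L" "union_cl C S L"
  shows "union_cl D S L"
  using assms(2) by induction (auto intro: union_cl.intros assms(1))

lemma bool_cl_UN:
  "finite I \<Longrightarrow> (\<And>i. i \<in> I \<Longrightarrow> bool_cl C S (F i)) \<Longrightarrow> bool_cl C S X \<Longrightarrow> bool_cl C S (X \<union> \<Union>(F ` I))"
proof (induction I rule: finite_induct)
  case (insert x I)
  have "X \<union> \<Union>(F ` insert x I) = (X \<union> \<Union>(F ` I)) \<union> F x" by auto
  then show ?case using insert by (auto intro: bool_cl.un)
qed simp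

lemma bool_cl_INT:
  "finite I \<Longrightarrow> (\<And>i. i \<in> I \<Longrightarrow> bool_cl C S (F i)) \<Longrightarrow> bool_cl C S X \<Longrightarrow> bool_cl C S (X \<inter> \<Inter>(F ` I))"
proof (induction I rule: finite_induct)
  case (insert x I)
  have "X \<inter> \<Inter>(F ` insert x I) = (X \<inter> \<Inter>(F ` I)) \<inter> F x" by auto
  then show ?case using insert by (auto intro: bool_cl.inter)
qed simp

lemma bool_cl_LLT_imp_LTT:
  assumes "finite S" "bool_cl LLT S L"
  shows "LTT S L"
  using assms(2) by induction (auto intro: LLT_imp_LTT LTT_Un LTT_Int LTT_complement assms(1))

lemma bool_cl_LLT_empty: "bool_cl LLT S {}"
  by (rule bool_cl.base) (rule LLT_empty)

section \<open>Locally threshold testable languages as boolean combinations\<close>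

lemma bool_cl_occ_le:
  assumes S: "finite S" and l: "1 \<le> l" and m: "m \<in> words_len S l"
  shows "bool_cl LLT S {w \<in> nonempty_words S. real (occ m w) \<le> t}"
proof (cases "t < 0")
  case True
  then have "{w \<in> nonempty_words S. real (occ m w) \<le> t} = {}" by auto
  then show ?thesis by (simp only: bool_cl_LLT_empty)
next
  case False
  then show ?thesis by (intro bool_cl.base LLT_occ_le[OF S l m]) simp
qed

lemma bool_cl_min_occ_eq:
  assumes S: "finite S" and l: "1 \<le> l" and m: "m \<in> words_len S l" and k: "k \<le> \<theta>"
  shows "bool_cl LLT S {w \<in> nonempty_words S. min (occ m w) \<theta> = k}"
proof (cases "k < \<theta>")
  case True
  then have eq: "{w \<in> nonempty_words S. min (occ m w) \<theta> = k} =
    {w \<in> nonempty_words S. real (occ m w) \<le> real k} \<inter>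
    (nonempty_words S - {w \<in> nonempty_words S. real (occ m w) \<le> real k - 1})"
    by auto
  show ?thesis unfolding eq by (intro bool_cl.inter bool_cl.compl bool_cl_occ_le[OF S l m])
next
  case False
  with k have eq: "{w \<in> nonempty_words S. min (occ m w) \<theta> = k} =
    nonempty_words S - {w \<in> nonempty_words S. real (occ m w) \<le> real \<theta> - 1}"
    by auto
  show ?thesis unfolding eq by (intro bool_cl.compl bool_cl_occ_le[OF S l m])
qed

lemma LLT_pref_eq:
  assumes l: "1 \<le> l" and p: "p \<in> words_upto S (int l - 1)"
  shows "LLT S {w \<in> nonempty_words S. pref (l - 1) w = p}"
proof -
  have "{w \<in> nonempty_words S. pref (l - 1) w = p} = LLin S l {p} (words_upto S (int l - 1)) (\<lambda>_. 0) 0"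
    unfolding LLin_def using suf_in_words_upto[OF _ l] by (auto simp: nonempty_words_def)
  then show ?thesis using p unfolding LLT_def
    by (intro exI[of _ l] exI[of _ "{p}"] exI[of _ "words_upto S (int l - 1)"]
       exI[of _ "\<lambda>_. 0"] exI[of _ 0]) auto
qed

lemma LLT_suf_eq:
  assumes l: "1 \<le> l" and s: "s \<in> words_upto S (int l - 1)"
  shows "LLT S {w \<in> nonempty_words S. suf (l - 1) w = s}"
proof -
  have "{w \<in> nonempty_words S. suf (l - 1) w = s} = LLin S l (words_upto S (int l - 1)) {s} (\<lambda>_. 0) 0"
    unfolding LLin_def using pref_in_words_upto[OF _ l] by (auto simp: nonempty_words_def)
  then show ?thesis using s unfolding LLT_def
    by (intro exI[of _ l] exI[of _ "words_upto S (int l - 1)"] exI[of _ "{s}"]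
       exI[of _ "\<lambda>_. 0"] exI[of _ 0]) auto
qed

text \<open>All that an \<open>ltt_params S L \<theta> l\<close> test can see of a word: its prefix and suffix of length
  \<open>l - 1\<close> and its factor counts capped at \<open>\<theta>\<close>.\<close>
definition ltt_signature :: "nat set \<Rightarrow> nat \<Rightarrow> nat \<Rightarrow> word \<Rightarrow> word \<times> word \<times> (word \<Rightarrow> nat)" where
  "ltt_signature S \<theta> l w =
    (pref (l - 1) w, suf (l - 1) w, \<lambda>m. if m \<in> words_len S l then min (occ m w) \<theta> else 0)"

lemma ltt_params_signature_eq:
  assumes L: "ltt_params S L \<theta> l" and w: "w \<in> nonempty_words S" "v \<in> nonempty_words S"
    and sig: "ltt_signature S \<theta> l w = ltt_signature S \<theta> l v"
  shows "w \<in> L \<longleftrightarrow> v \<in> L"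
proof (rule ltt_paramsD[OF L w])
  show "pref (l - 1) w = pref (l - 1) v" "suf (l - 1) w = suf (l - 1) v"
    using sig by (simp_all add: ltt_signature_def)
  fix m assume m: "m \<in> words_len S l" and "occ m w < \<theta> \<or> occ m v < \<theta>"
  moreover have "(\<lambda>m. if m \<in> words_len S l then min (occ m w) \<theta> else 0) =
      (\<lambda>m. if m \<in> words_len S l then min (occ m v) \<theta> else 0)"
    using sig by (simp add: ltt_signature_def)
  from fun_cong[OF this, of m] m have "min (occ m w) \<theta> = min (occ m v) \<theta>" by simp
  ultimately show "occ m w = occ m v" by (auto simp: min_def split: if_splits)
qed

lemma finite_ltt_signatures:
  assumes S: "finite S" and A: "A \<subseteq> lists S"
  shows "finite (ltt_signature S \<theta> l ` A)"
proof (rule finite_subset)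
  let ?W = "words_len S l"
  show "ltt_signature S \<theta> l ` A \<subseteq> words_upto S (int l) \<times> words_upto S (int l) \<times>
      {f. \<forall>m. (m \<in> ?W \<longrightarrow> f m \<in> {..\<theta>}) \<and> (m \<notin> ?W \<longrightarrow> f m = 0)}"
    using A by (auto simp: ltt_signature_def words_upto_def pref_def suf_def
        dest: in_set_takeD in_set_dropD)
  show "finite (words_upto S (int l) \<times> words_upto S (int l) \<times>
      {f. \<forall>m. (m \<in> ?W \<longrightarrow> f m \<in> {..\<theta>}) \<and> (m \<notin> ?W \<longrightarrow> f m = 0)})"
    using finite_words_upto[OF S] finite_set_of_finite_funs[OF finite_words_len[OF S, of l], of "{..\<theta>}" 0]
    by auto
qed

lemma bool_cl_signature_class:
  assumes S: "finite S" and l: "1 \<le> l" and v: "v \<in> lists S"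
  shows "bool_cl LLT S {w \<in> nonempty_words S. ltt_signature S \<theta> l w = ltt_signature S \<theta> l v}"
proof -
  have "{w \<in> nonempty_words S. ltt_signature S \<theta> l w = ltt_signature S \<theta> l v} =
      ({w \<in> nonempty_words S. pref (l - 1) w = pref (l - 1) v} \<inter>
       {w \<in> nonempty_words S. suf (l - 1) w = suf (l - 1) v}) \<inter>
      \<Inter>((\<lambda>m. {w \<in> nonempty_words S. min (occ m w) \<theta> = min (occ m v) \<theta>}) ` words_len S l)"
    by (auto simp: ltt_signature_def fun_eq_iff)
  moreover have "bool_cl LLT S \<dots>"
    by (intro bool_cl_INT finite_words_len[OF S] bool_cl_min_occ_eq[OF S l] bool_cl.inter bool_cl.base
        LLT_pref_eq[OF l] LLT_suf_eq[OF l] pref_in_words_upto[OF v l] suf_in_words_upto[OF v l]) auto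
  ultimately show ?thesis by simp
qed

lemma LTT_imp_bool_cl_LLT:
  assumes S: "finite S" and "LTT S L"
  shows "bool_cl LLT S L"
proof -
  obtain \<theta> l where l: "1 \<le> l" and L: "ltt_params S L \<theta> l" and LN: "L \<subseteq> nonempty_words S"
    using assms(2) unfolding LTT_iff_ltt_params by blast
  let ?sig = "ltt_signature S \<theta> l"
  let ?class = "\<lambda>s. {w \<in> nonempty_words S. ?sig w = s}"
  have "L = {} \<union> \<Union>(?class ` ?sig ` L)"
    using LN ltt_params_signature_eq[OF L] by blast
  moreover have "bool_cl LLT S ({} \<union> \<Union>(?class ` ?sig ` L))"
  proof (rule bool_cl_UN)
    show "finite (?sig ` L)"
      by (rule finite_ltt_signatures[OF S]) (use LN in \<open>auto simp: nonempty_words_def\<close>)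
    show "bool_cl LLT S (?class s)" if "s \<in> ?sig ` L" for s
      using that bool_cl_signature_class[OF S l] LN by (auto simp: nonempty_words_def)
    show "bool_cl LLT S {}" by (rule bool_cl_LLT_empty)
  qed
  ultimately show ?thesis by simp
qed

section \<open>Separating languages\<close>

lemma infixes_append_subset: "infixes l x \<subseteq> infixes l (x @ z)"
  unfolding infixes_def by force

lemma infixes_subset_overlapping_cover:
  assumes "w = x @ z" "w = u @ y" "length u + l \<le> length x + 1"
  shows "infixes l w \<subseteq> infixes l x \<union> infixes l y"
proof
  fix v assume "v \<in> infixes l w"
  then obtain i where i: "i + l \<le> length w" "v = take l (drop i w)" by (auto simp: infixes_def)
  show "v \<in> infixes l x \<union> infixes l y"
  proof (cases "i + l \<le> length x")
    case True
    then have "v = take l (drop i x)" using i assms(1) by simp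
    then show ?thesis using True by (auto simp: infixes_def)
  next
    case False
    then have iu: "length u \<le> i" using assms(3) by linarith
    then have "v = take l (drop (i - length u) y)" using i assms(2) by simp
    moreover have "i - length u + l \<le> length y" using i iu assms(2) by simp
    ultimately show ?thesis by (auto simp: infixes_def)
  qed
qed

lemma singleton_in_infixes_1_iff: "[a] \<in> infixes 1 w \<longleftrightarrow> a \<in> set w"
proof -
  have "take 1 (drop i w) = [w ! i]" if "i < length w" for i
    using that by (simp add: Cons_nth_drop_Suc[symmetric])
  then have "[a] \<in> infixes 1 w \<longleftrightarrow> (\<exists>i < length w. w ! i = a)"
    unfolding infixes_def by (auto; metis Suc_eq_plus1 Suc_le_eq list.inject)
  then show ?thesis by (simp add: in_set_conv_nth)
qed

definition single_zero :: "nat \<Rightarrow> word" where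
  "single_zero N = replicate N 1 @ [0] @ replicate N 1"

definition double_zero :: "nat \<Rightarrow> word" where
  "double_zero N = single_zero N @ [0] @ replicate N 1"

lemma single_zero_in_nonempty_words: "single_zero N \<in> nonempty_words {0, 1}"
  by (auto simp: single_zero_def nonempty_words_def)

lemma double_zero_in_nonempty_words: "double_zero N \<in> nonempty_words {0, 1}"
  by (auto simp: double_zero_def single_zero_def nonempty_words_def)

lemma local_view_double_zero:
  assumes "l \<le> N + 1"
  shows "pref (l - 1) (double_zero N) = pref (l - 1) (single_zero N)"
    and "suf (l - 1) (double_zero N) = suf (l - 1) (single_zero N)"
    and "infixes l (double_zero N) = infixes l (single_zero N)"
proof -
  have l: "l - 1 \<le> N" using assms by simp
  show "pref (l - 1) (double_zero N) = pref (l - 1) (single_zero N)"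
    using pref_replicate_append[OF l] by (simp add: double_zero_def single_zero_def)
  have "single_zero N = (replicate N 1 @ [0]) @ replicate N 1"
    "double_zero N = (single_zero N @ [0]) @ replicate N 1"
    by (simp_all add: single_zero_def double_zero_def)
  then show "suf (l - 1) (double_zero N) = suf (l - 1) (single_zero N)"
    by (metis suf_append_replicate[OF l])
  have "infixes l (double_zero N) \<subseteq> infixes l (single_zero N) \<union> infixes l (single_zero N)"
    by (rule infixes_subset_overlapping_cover[of _ "single_zero N" "[0] @ replicate N 1"
          "replicate N 1 @ [0]"])
      (use assms in \<open>auto simp: double_zero_def single_zero_def\<close>)
  then show "infixes l (double_zero N) = infixes l (single_zero N)"
    using infixes_append_subset[of l "single_zero N"] by (auto simp: double_zero_def)
qed

definition eventually_doubles_zero :: "lang \<Rightarrow> bool" where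
  "eventually_doubles_zero L \<longleftrightarrow> (\<forall>\<^sub>F N in sequentially. single_zero N \<in> L \<longrightarrow> double_zero N \<in> L)"

lemma SLT_eventually_doubles_zero:
  assumes "SLT {0, 1} L"
  shows "eventually_doubles_zero L"
proof -
  obtain l \<pi> \<sigma> \<mu> where mem: "\<forall>w \<in> nonempty_words {0, 1}. w \<in> L \<longleftrightarrow>
      pref (l - 1) w \<in> \<pi> \<and> infixes l w \<subseteq> \<mu> \<and> suf (l - 1) w \<in> \<sigma>"
    using assms unfolding SLT_def by blast
  have "single_zero N \<in> L \<longrightarrow> double_zero N \<in> L" if "l \<le> N" for N
    using mem single_zero_in_nonempty_words double_zero_in_nonempty_words
      local_view_double_zero[of l N] that by simp
  then show ?thesis
    unfolding eventually_doubles_zero_def by (rule eventually_mono[OF eventually_ge_at_top])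
qed

lemma eventually_doubles_zero_Un:
  assumes "eventually_doubles_zero L1" "eventually_doubles_zero L2"
  shows "eventually_doubles_zero (L1 \<union> L2)"
  using assms unfolding eventually_doubles_zero_def by (rule eventually_elim2) auto

lemma union_cl_SLT_eventually_doubles_zero:
  "union_cl SLT {0, 1} L \<Longrightarrow> eventually_doubles_zero L"
  by (induction rule: union_cl.induct) (auto intro: SLT_eventually_doubles_zero eventually_doubles_zero_Un)

definition at_most_one_zero :: lang where
  "at_most_one_zero = {w \<in> nonempty_words {0, 1}. count_list w 0 \<le> 1}"

lemma count_list_single_zero: "count_list (single_zero N) 0 = 1"
  by (simp add: single_zero_def)

lemma count_list_double_zero: "count_list (double_zero N) 0 = 2"
  by (simp add: double_zero_def single_zero_def)

lemma not_eventually_doubles_zero_at_most_one_zero: "\<not> eventually_doubles_zero at_most_one_zero"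
  using single_zero_in_nonempty_words count_list_single_zero count_list_double_zero
  by (simp add: eventually_doubles_zero_def at_most_one_zero_def)

lemma LLT_at_most_one_zero: "LLT {0, 1} at_most_one_zero"
  using LLT_count_list_le[of "{0, 1}" 0 1] by (simp add: at_most_one_zero_def)

lemma at_most_one_zero_not_LT: "\<not> LT {0, 1} at_most_one_zero"
proof
  assume "LT {0, 1} at_most_one_zero"
  then obtain l where "\<forall>w1 \<in> nonempty_words {0, 1}. \<forall>w2 \<in> nonempty_words {0, 1}.
       pref (l - 1) w1 = pref (l - 1) w2 \<and> infixes l w1 = infixes l w2 \<and>
       suf (l - 1) w1 = suf (l - 1) w2 \<longrightarrow> (w1 \<in> at_most_one_zero \<longleftrightarrow> w2 \<in> at_most_one_zero)"
    unfolding LT_def by blast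
  then have "double_zero l \<in> at_most_one_zero \<longleftrightarrow> single_zero l \<in> at_most_one_zero"
    using local_view_double_zero[of l l] single_zero_in_nonempty_words double_zero_in_nonempty_words
    by simp
  then show False
    using single_zero_in_nonempty_words count_list_single_zero count_list_double_zero
    by (simp add: at_most_one_zero_def)
qed

definition eventually_drops_zero :: "lang \<Rightarrow> bool" where
  "eventually_drops_zero L \<longleftrightarrow> (\<forall>\<^sub>F N in sequentially. single_zero N \<in> L \<longrightarrow> replicate N 1 \<in> L)"

lemma LLT_eventually_drops_zero:
  assumes "LLT {0, 1} L"
  shows "eventually_drops_zero L"
  using assms
proof (cases rule: LLT_E)
  case 1
  then show ?thesis by (simp add: eventually_drops_zero_def)
next
  case (2 l \<pi> \<sigma> \<alpha> \<theta>)
  have "single_zero N \<in> L \<longrightarrow> replicate N 1 \<in> L" if N: "l \<le> N" for N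
  proof
    assume "single_zero N \<in> L"
    moreover have "(\<Sum>m\<in>words_len {0, 1} l. \<alpha> m * real (occ m (replicate N 1)))
        \<le> (\<Sum>m\<in>words_len {0, 1} l. \<alpha> m * real (occ m (single_zero N)))"
    proof (rule sum_mono)
      fix m assume m: "m \<in> words_len {0, 1} l"
      then have "occ m (replicate N 1) \<le> occ m (single_zero N)"
        unfolding single_zero_def using 2(1) by (intro occ_le_occ_append) (simp add: words_len_def)
      then show "\<alpha> m * real (occ m (replicate N 1)) \<le> \<alpha> m * real (occ m (single_zero N))"
        using 2(2) m by (simp add: mult_left_mono)
    qed
    moreover have "pref (l - 1) (replicate N 1) = pref (l - 1) (single_zero N)"
      "suf (l - 1) (replicate N 1) = suf (l - 1) (single_zero N)"
      using N pref_replicate_append[of "l - 1" N 1 "[]"] pref_replicate_append[of "l - 1" N 1]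
        suf_append_replicate[of "l - 1" N "[]" 1] suf_append_replicate[of "l - 1" N "replicate N 1 @ [0]" 1]
      by (simp_all add: single_zero_def)
    moreover have "replicate N 1 \<in> nonempty_words {0, 1}"
      using N 2(1) by (auto simp: nonempty_words_def)
    ultimately show "replicate N 1 \<in> L" unfolding 2(4) LLin_def by auto
  qed
  then show ?thesis
    unfolding eventually_drops_zero_def by (rule eventually_mono[OF eventually_ge_at_top])
qed

lemma union_inter_cl_LLT_eventually_drops_zero:
  "union_inter_cl LLT {0, 1} L \<Longrightarrow> eventually_drops_zero L"
proof (induction rule: union_inter_cl.induct)
  case (base L)
  then show ?case by (rule LLT_eventually_drops_zero)
next
  case (un L1 L2)
  then show ?case unfolding eventually_drops_zero_def by (auto elim: eventually_elim2)
next
  case (inter L1 L2)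
  then show ?case unfolding eventually_drops_zero_def by (auto elim: eventually_elim2)
qed

definition contains_zero :: lang where
  "contains_zero = {w \<in> nonempty_words {0, 1}. 0 \<in> set w}"

lemma not_eventually_drops_zero_contains_zero: "\<not> eventually_drops_zero contains_zero"
  using single_zero_in_nonempty_words by (simp add: eventually_drops_zero_def contains_zero_def single_zero_def)

lemma LT_contains_zero: "LT {0, 1} contains_zero"
  unfolding LT_def contains_zero_def
  by (intro conjI exI[of _ 1]) (auto simp: singleton_in_infixes_1_iff[symmetric])

lemma LTT_contains_zero: "LTT {0, 1} contains_zero"
proof -
  have "contains_zero = nonempty_words {0, 1} - {w \<in> nonempty_words {0, 1}. real (count_list w 0) \<le> 0}"
    by (auto simp: contains_zero_def count_list_0_iff)
  moreover have "bool_cl LLT {0, 1} \<dots>"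
    by (intro bool_cl.compl bool_cl.base LLT_count_list_le) auto
  ultimately show ?thesis by (simp add: bool_cl_LLT_imp_LTT)
qed

definition lacks_zero_or_one :: lang where
  "lacks_zero_or_one = {w \<in> nonempty_words {0, 1, 2}. 0 \<notin> set w} \<union> {w \<in> nonempty_words {0, 1, 2}. 1 \<notin> set w}"

lemma union_cl_LLT_lacks_zero_or_one: "union_cl LLT {0, 1, 2} lacks_zero_or_one"
proof -
  have "LLT {0, 1, 2} {w \<in> nonempty_words {0, 1, 2}. a \<notin> set w}" if "a \<in> {0, 1, 2}" for a
    using LLT_count_list_le[of "{0, 1, 2}" a 0] that by (simp add: count_list_0_iff)
  then show ?thesis unfolding lacks_zero_or_one_def by (intro union_cl.un union_cl.base) auto
qed

lemma occ_three_blocks: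
  assumes m: "1 \<le> length m" and N: "length m - 1 \<le> N"
  shows "occ m (replicate N c @ [x] @ replicate N c @ [y] @ replicate N c) =
    occ m (replicate N c) + occ m (replicate (length m - 1) c @ [x] @ replicate N c)
      + occ m (replicate (length m - 1) c @ [y] @ replicate N c)"
proof -
  let ?s = "replicate (length m - 1) c"
  let ?R = "replicate N c"
  have "suf (length m - 1) ?R = ?s" "suf (length m - 1) (?s @ [x] @ ?R) = ?s"
    using suf_append_replicate[OF N, of "[]"] suf_append_replicate[OF N, of "?s @ [x]"] by simp_all
  then show ?thesis
    using occ_append[OF m, of ?R "[x] @ ?R @ [y] @ ?R"] occ_append[OF m, of "?s @ [x] @ ?R" "[y] @ ?R"]
    by simp
qed

lemma not_LLT_lacks_zero_or_one: "\<not> LLT {0, 1, 2} lacks_zero_or_one"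
proof
  assume "LLT {0, 1, 2} lacks_zero_or_one"
  then show False
  proof (cases rule: LLT_E)
    case 1
    moreover have "[2] \<in> lacks_zero_or_one" by (simp add: lacks_zero_or_one_def nonempty_words_def)
    ultimately show False by simp
  next
    case (2 l \<pi> \<sigma> \<alpha> \<theta>)
    define R where "R = (replicate l 2 :: word)"
    define w where "w = (\<lambda>x y. R @ [x] @ R @ [y] @ R)"
    let ?W = "words_len {0, 1, 2} l"
    define g where "g = (\<Sum>m\<in>?W. \<alpha> m * real (occ m R))"
    define f where "f = (\<lambda>x. \<Sum>m\<in>?W. \<alpha> m * real (occ m (replicate (l - 1) 2 @ [x] @ R)))"
    have weighted_sum: "(\<Sum>m\<in>?W. \<alpha> m * real (occ m (w x y))) = g + f x + f y" for x y
      unfolding g_def f_def sum.distrib[symmetric] w_def R_def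
      by (rule sum.cong) (use occ_three_blocks 2(1) in \<open>auto simp: words_len_def algebra_simps\<close>)
    have view: "pref (l - 1) (w x y) = replicate (l - 1) 2" "suf (l - 1) (w x y) = replicate (l - 1) 2"
      for x y
      using pref_replicate_append[of "l - 1" l 2] suf_append_replicate[of "l - 1" l "R @ [x] @ R @ [y]" 2]
      by (simp_all add: w_def R_def)
    have nonempty: "w x y \<in> nonempty_words {0, 1, 2}" if "x \<in> {0, 1, 2}" "y \<in> {0, 1, 2}" for x y
      using that by (auto simp: w_def R_def nonempty_words_def)
    have "w 0 0 \<in> LLin {0, 1, 2} l \<pi> \<sigma> \<alpha> \<theta>" "w 1 1 \<in> LLin {0, 1, 2} l \<pi> \<sigma> \<alpha> \<theta>"
      using nonempty unfolding 2(4)[symmetric] by (auto simp: lacks_zero_or_one_def w_def R_def)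
    then have "g + f 0 + f 0 \<le> \<theta>" "g + f 1 + f 1 \<le> \<theta>"
      "pref (l - 1) (w 0 0) \<in> \<pi>" "suf (l - 1) (w 0 0) \<in> \<sigma>"
      using weighted_sum[of 0 0] weighted_sum[of 1 1] unfolding LLin_def by auto
    moreover have "pref (l - 1) (w 0 1) = pref (l - 1) (w 0 0)" "suf (l - 1) (w 0 1) = suf (l - 1) (w 0 0)"
      using view by simp_all
    ultimately have "w 0 1 \<in> LLin {0, 1, 2} l \<pi> \<sigma> \<alpha> \<theta>"
      using nonempty[of 0 1] weighted_sum[of 0 1] unfolding LLin_def by auto
    then have "w 0 1 \<in> lacks_zero_or_one" using 2(4) by simp
    then show False by (simp add: lacks_zero_or_one_def w_def R_def)
  qed
qed

lemma class_subsetI: "(\<And>S L. finite S \<Longrightarrow> C S L \<Longrightarrow> D S L) \<Longrightarrow> class_subset C D"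
  by (simp add: class_subset_def)

lemma not_class_subsetI: "finite S \<Longrightarrow> C S L \<Longrightarrow> \<not> D S L \<Longrightarrow> \<not> class_subset C D"
  by (auto simp: class_subset_def)

theorem mainTheorem9:
  shows "strict_subclass SLT LLT \<and> strict_subclass LLT (union_cl LLT) \<and>
         class_subset (union_cl LLT) (union_inter_cl LLT) \<and>
         strict_subclass (union_inter_cl LLT) LTT \<and>
         strict_subclass (union_cl SLT) (union_cl LLT) \<and>
         incomparable LLT LT \<and> incomparable (union_cl LLT) LT \<and>
         class_subset LTT (bool_cl LLT) \<and> class_subset (bool_cl LLT) LTT"
proof -
  have fin: "finite {0::nat, 1}" "finite {0::nat, 1, 2}" by simp_all
  have one_zero: "union_cl LLT {0, 1} at_most_one_zero" "\<not> union_cl SLT {0, 1} at_most_one_zero"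
    using LLT_at_most_one_zero union_cl_SLT_eventually_doubles_zero
      not_eventually_doubles_zero_at_most_one_zero by (auto intro: union_cl.base)
  have no_zero: "\<not> union_inter_cl LLT {0, 1} contains_zero" "\<not> union_cl LLT {0, 1} contains_zero"
    using union_inter_cl_LLT_eventually_drops_zero not_eventually_drops_zero_contains_zero
      union_cl_imp_union_inter_cl by blast+
  have "class_subset SLT LLT" "class_subset (union_cl SLT) (union_cl LLT)"
    "class_subset LLT (union_cl LLT)" "class_subset (union_cl LLT) (union_inter_cl LLT)"
    "class_subset (union_inter_cl LLT) LTT" "class_subset LTT (bool_cl LLT)"
    "class_subset (bool_cl LLT) LTT"
    using SLT_imp_LLT union_cl_mono[of SLT _ LLT] union_cl.base[of LLT] union_cl_imp_union_inter_cl
      union_inter_cl_imp_bool_cl bool_cl_LLT_imp_LTT LTT_imp_bool_cl_LLT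
    by (auto intro!: class_subsetI)
  moreover have "\<not> class_subset LLT SLT" "\<not> class_subset (union_cl LLT) (union_cl SLT)"
    "\<not> class_subset LLT LT" "\<not> class_subset (union_cl LLT) LT"
    using not_class_subsetI[OF fin(1), of _ at_most_one_zero] LLT_at_most_one_zero one_zero
      at_most_one_zero_not_LT by (auto intro: union_cl.base)
  moreover have "\<not> class_subset LTT (union_inter_cl LLT)" "\<not> class_subset LT LLT"
    "\<not> class_subset LT (union_cl LLT)"
    using not_class_subsetI[OF fin(1), of _ contains_zero] LTT_contains_zero LT_contains_zero no_zero
    by (auto intro: union_cl.base)
  moreover have "\<not> class_subset (union_cl LLT) LLT"
    using fin(2) union_cl_LLT_lacks_zero_or_one not_LLT_lacks_zero_or_one by (rule not_class_subsetI)
  ultimately show ?thesis unfolding strict_subclass_def incomparable_def by blast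
qed

end
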